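(* Let $k\ge2$, $n\ge1$ be integers, let $\bar{\mathcal{P}}\in\mathbb{R}^{[k,n]}$ be a columnwise-substochastic tensor, $\mathbf{v}\in\mathbb{R}^n$ a stochastic vector and $\alpha\in[0,1)$. Define $\mathcal{P}\in\mathbb{R}^{[k,n]}$ by $p_{ii_2\dots i_k}:=\bar p_{ii_2\dots i_k}+v_i\left(1-\sum_{\ell=1}^n\bar p_{\ell i_2\dots i_k}\right)$. If a nonnegative vector $\mathbf{y}$ solves the MLPPR system $(\mathbf{e}^T\mathbf{y})^{k-2}\mathbf{y}-\alpha\bar{\mathcal{P}}\mathbf{y}^{k-1}=\mathbf{v}$, then $\mathbf{y}$ solves the homogeneous MPR equation $$\mathbf{y}(\mathbf{e}^T\mathbf{y})^{k-2}=\alpha\mathcal{P}\mathbf{y}^{k-1}+(1-\alpha)\mathbf{v}(\mathbf{e}^T\mathbf{y})^{k-1},\quad\mathbf{y}\in\mathbb{R}^n_+.$$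
   Context: For $\mathcal{P}\in\mathbb{R}^{[k,n]}$ (real tensors of order $k$, dimension $n$) and $\mathbf{y}\in\mathbb{R}^n$, $(\mathcal{P}\mathbf{y}^{k-1})_i=\sum_{i_2,\dots,i_k}p_{i i_2\dots i_k}y_{i_2}\cdots y_{i_k}$. $\bar{\mathcal{P}}$ is columnwise-substochastic if its entries are nonnegative and $\sum_{i}\bar p_{i i_2\dots i_k}\le1$ for all $i_2,\dots,i_k$. $\mathbf{e}$ is the all-ones vector; a stochastic vector is nonnegative with entries summing to $1$. *)

theory Defs
  imports Complex_Main
begin

text \<open>A real tensor of order k and dimension n is a function on index lists
  [i_1, ..., i_k] with entries in {0..<n} (0-based indices). Vectors in R^n are
  functions nat => real, only their values on {0..<n} matter.\<close>

definition idx :: "nat \<Rightarrow> nat \<Rightarrow> nat list set" where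
  "idx m n = {js. length js = m \<and> set js \<subseteq> {..<n}}"

definition tensor_apply :: "(nat list \<Rightarrow> real) \<Rightarrow> nat \<Rightarrow> nat \<Rightarrow> (nat \<Rightarrow> real) \<Rightarrow> nat \<Rightarrow> real" where
  "tensor_apply P k n y i = (\<Sum>js\<in>idx (k - 1) n. P (i # js) * prod_list (map y js))"

definition col_substochastic :: "(nat list \<Rightarrow> real) \<Rightarrow> nat \<Rightarrow> nat \<Rightarrow> bool" where
  "col_substochastic P k n \<longleftrightarrow>
     (\<forall>is\<in>idx k n. 0 \<le> P is) \<and>
     (\<forall>js\<in>idx (k - 1) n. (\<Sum>i<n. P (i # js)) \<le> 1)"

definition stochastic_vec :: "(nat \<Rightarrow> real) \<Rightarrow> nat \<Rightarrow> bool" where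
  "stochastic_vec v n \<longleftrightarrow> (\<forall>i<n. 0 \<le> v i) \<and> (\<Sum>i<n. v i) = 1"

definition mpr_tensor :: "(nat list \<Rightarrow> real) \<Rightarrow> (nat \<Rightarrow> real) \<Rightarrow> nat \<Rightarrow> nat list \<Rightarrow> real" where
  "mpr_tensor Pb v n is = Pb is + v (hd is) * (1 - (\<Sum>l<n. Pb (l # tl is)))"

end

theory Submission
  imports Defs
begin

text \<open>Summing the MLPPR equation over i and using e^T v = 1 gives
  (e^T y)^(k-1) - \<alpha> e^T (Pbar y^(k-1)) = 1.  On the other hand, since
  the entries of y^(k-1) over all index lists sum to (e^T y)^(k-1), the rank-one
  correction in P contributes v_i ((e^T y)^(k-1) - e^T (Pbar y^(k-1))) to
  (P y^(k-1))_i.  Substituting the first identity into the second yields the MPR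
  equation.\<close>

lemma idx_Suc: "idx (Suc m) n = (\<lambda>(j, js). j # js) ` ({..<n} \<times> idx m n)"
  unfolding idx_def by (auto simp: length_Suc_conv image_iff)

lemma sum_idx_prod_list:
  fixes y :: "nat \<Rightarrow> 'a::comm_semiring_1"
  shows "(\<Sum>js\<in>idx m n. prod_list (map y js)) = (\<Sum>j<n. y j) ^ m"
proof (induction m)
  case 0
  have "idx 0 n = {[]}" unfolding idx_def by auto
  then show ?case by simp
next
  case (Suc m)
  have inj: "inj_on (\<lambda>(j, js). j # js) ({..<n} \<times> idx m n)"
    by (auto simp: inj_on_def)
  have "(\<Sum>js\<in>idx (Suc m) n. prod_list (map y js))
      = (\<Sum>j<n. \<Sum>js\<in>idx m n. y j * prod_list (map y js))"
    unfolding idx_Suc sum.reindex[OF inj] sum.cartesian_product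
    by (simp add: case_prod_beta)
  also have "\<dots> = (\<Sum>j<n. y j) * (\<Sum>js\<in>idx m n. prod_list (map y js))"
    by (rule sum_product[symmetric])
  finally show ?case using Suc by simp
qed

lemma sum_tensor_apply:
  "(\<Sum>i<n. tensor_apply P k n y i)
     = (\<Sum>js\<in>idx (k - 1) n. (\<Sum>i<n. P (i # js)) * prod_list (map y js))"
  unfolding tensor_apply_def by (subst sum.swap) (simp add: sum_distrib_right)

lemma tensor_apply_mpr_tensor:
  "tensor_apply (mpr_tensor Pb v n) k n y i
     = tensor_apply Pb k n y i
       + v i * ((\<Sum>j<n. y j) ^ (k - 1) - (\<Sum>l<n. tensor_apply Pb k n y l))"
proof -
  have "tensor_apply (mpr_tensor Pb v n) k n y i
      = (\<Sum>js\<in>idx (k - 1) n. Pb (i # js) * prod_list (map y js)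
           + v i * (prod_list (map y js) - (\<Sum>l<n. Pb (l # js)) * prod_list (map y js)))"
    unfolding tensor_apply_def mpr_tensor_def by (intro sum.cong) (auto simp: algebra_simps)
  then show ?thesis
    unfolding sum_tensor_apply
    by (simp add: tensor_apply_def sum.distrib sum_subtractf sum_distrib_left[symmetric]
        sum_idx_prod_list)
qed

lemma mlppr_solution_mass:
  assumes "k \<ge> 2" and "(\<Sum>i<n. v i) = 1"
    and "\<forall>i<n. (\<Sum>j<n. y j) ^ (k - 2) * y i - \<alpha> * tensor_apply Pb k n y i = v i"
  shows "(\<Sum>j<n. y j) ^ (k - 1) - \<alpha> * (\<Sum>l<n. tensor_apply Pb k n y l) = 1"
proof -
  have "(\<Sum>j<n. y j) ^ (k - 1) = (\<Sum>j<n. y j) ^ (k - 2) * (\<Sum>j<n. y j)"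
    using \<open>k \<ge> 2\<close> by (simp flip: power_Suc2 add: Suc_diff_Suc numeral_2_eq_2)
  also have "\<dots> - \<alpha> * (\<Sum>l<n. tensor_apply Pb k n y l)
      = (\<Sum>i<n. (\<Sum>j<n. y j) ^ (k - 2) * y i - \<alpha> * tensor_apply Pb k n y i)"
    by (simp add: sum_subtractf sum_distrib_left)
  also have "\<dots> = 1"
    using assms(2,3) by simp
  finally show ?thesis .
qed

theorem lemma3p14:
  fixes k n :: nat and Pb :: "nat list \<Rightarrow> real" and v y :: "nat \<Rightarrow> real" and \<alpha> :: real
  assumes "k \<ge> 2" and "n \<ge> 1"
    and "col_substochastic Pb k n"
    and "stochastic_vec v n"
    and "0 \<le> \<alpha>" and "\<alpha> < 1"
    and "\<forall>i<n. 0 \<le> y i"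
    and "\<forall>i<n. (\<Sum>j<n. y j) ^ (k - 2) * y i - \<alpha> * tensor_apply Pb k n y i = v i"
  shows "(\<forall>i<n. y i * (\<Sum>j<n. y j) ^ (k - 2) =
            \<alpha> * tensor_apply (mpr_tensor Pb v n) k n y i
            + (1 - \<alpha>) * v i * (\<Sum>j<n. y j) ^ (k - 1))
         \<and> (\<forall>i<n. 0 \<le> y i)"
proof -
  have mass: "(\<Sum>j<n. y j) ^ (k - 1) - \<alpha> * (\<Sum>l<n. tensor_apply Pb k n y l) = 1"
    using mlppr_solution_mass assms(1,4,8) unfolding stochastic_vec_def by blast
  have "y i * (\<Sum>j<n. y j) ^ (k - 2) =
          \<alpha> * tensor_apply (mpr_tensor Pb v n) k n y i
          + (1 - \<alpha>) * v i * (\<Sum>j<n. y j) ^ (k - 1)" if "i < n" for i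
  proof -
    have "\<alpha> * tensor_apply (mpr_tensor Pb v n) k n y i + (1 - \<alpha>) * v i * (\<Sum>j<n. y j) ^ (k - 1)
        = \<alpha> * tensor_apply Pb k n y i
          + v i * ((\<Sum>j<n. y j) ^ (k - 1) - \<alpha> * (\<Sum>l<n. tensor_apply Pb k n y l))"
      unfolding tensor_apply_mpr_tensor by (simp add: algebra_simps)
    also have "\<dots> = y i * (\<Sum>j<n. y j) ^ (k - 2)"
      using mass assms(8) \<open>i < n\<close> by (simp add: algebra_simps)
    finally show ?thesis by simp
  qed
  then show ?thesis using assms(7) by blast
qed

end
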